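(* There exists a countable family $\mathcal{F}=\{f_n : n\in\omega\}$ of continuous functions $f_n\colon 2^\omega\to 2^\omega$ such that every maximal square covered by $\mathcal{F}$ is uncountable; that is, whenever $S\subseteq 2^\omega$ is maximal with respect to inclusion among subsets of $2^\omega$ such that $S\times S$ is covered by $\mathcal{F}$, the set $S$ is uncountable.
   Context: $2^\omega$ denotes the Cantor set, i.e. the space of all functions $\omega\to\{0,1\}$ with the product topology. A set $M\subseteq 2^\omega\times 2^\omega$ is said to be covered by a family of functions $\mathcal{F}$ if for every $(x,y)\in M$ there is $f\in\mathcal{F}$ such that either $y=f(x)$ or $x=f(y)$. *)

theory Defs
  imports "HOL-Analysis.Analysis"
begin

text \<open>The Cantor set 2^omega is the type nat => bool, carrying the product topology
(Function_Topology) of the discrete two-point space bool (order topology on bool).\<close>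

type_synonym cantor = "nat \<Rightarrow> bool"

definition covered_by :: "(cantor \<times> cantor) set \<Rightarrow> (cantor \<Rightarrow> cantor) set \<Rightarrow> bool" where
  "covered_by M F \<longleftrightarrow> (\<forall>(x, y) \<in> M. \<exists>f \<in> F. y = f x \<or> x = f y)"

definition maximal_covered_square :: "(cantor \<Rightarrow> cantor) set \<Rightarrow> cantor set \<Rightarrow> bool" where
  "maximal_covered_square F S \<longleftrightarrow>
     covered_by (S \<times> S) F \<and> (\<forall>T. S \<subseteq> T \<and> covered_by (T \<times> T) F \<longrightarrow> T = S)"

end

theory Submission
  imports Defs
begin

text \<open>Take \<open>f\<^sub>0 = id\<close> and let \<open>f\<^sub>n\<close> read off the \<open>n\<close>-th section \<open>k \<mapsto> z\<langle>n,k\<rangle>\<close> of a point \<open>z\<close>,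
  a continuous map. Given a countable square \<open>S \<times> S\<close> covered by this family, choose
  \<open>z \<notin> S\<close> whose sections \<open>1, 2, \<dots>\<close> enumerate \<open>S\<close>; this is possible because the
  section \<open>0\<close> of \<open>z\<close> is still free and \<open>2\<^sup>\<omega>\<close> is uncountable. Then every pair in
  \<open>(S \<union> {z}) \<times> (S \<union> {z})\<close> is covered, so \<open>S\<close> was not maximal.\<close>

definition cantor_section :: "nat \<Rightarrow> cantor \<Rightarrow> cantor" where
  "cantor_section n z = (\<lambda>k. z (prod_encode (n, k)))"

definition section_family :: "nat \<Rightarrow> cantor \<Rightarrow> cantor" where
  "section_family n = (if n = 0 then id else cantor_section n)"

definition cantor_code :: "cantor \<Rightarrow> (nat \<Rightarrow> cantor) \<Rightarrow> cantor" where
  "cantor_code x e = (\<lambda>i. case prod_decode i of (0, k) \<Rightarrow> x k | (Suc n, k) \<Rightarrow> e n k)"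

lemma cantor_section_code_0: "cantor_section 0 (cantor_code x e) = x"
  by (simp add: cantor_section_def cantor_code_def)

lemma cantor_section_code_Suc: "cantor_section (Suc n) (cantor_code x e) = e n"
  by (simp add: cantor_section_def cantor_code_def)

lemma inj_cantor_code: "inj (\<lambda>x. cantor_code x e)"
  by (rule injI) (metis cantor_section_code_0)

lemma continuous_on_cantor_section: "continuous_on UNIV (cantor_section n)"
  unfolding cantor_section_def
  by (intro continuous_on_coordinatewise_then_product continuous_on_product_coordinates)

lemma continuous_on_section_family: "continuous_on UNIV (section_family n)"
  by (simp add: section_family_def continuous_on_id continuous_on_cantor_section)

lemma uncountable_UNIV_cantor: "uncountable (UNIV :: cantor set)"
proof
  assume "countable (UNIV :: cantor set)"
  then obtain g :: "nat \<Rightarrow> cantor" where "surj g"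
    by (metis UNIV_not_empty range_from_nat_into)
  then obtain n where "g n = (\<lambda>m. \<not> g m m)"
    by (metis surjD)
  then show False
    by (metis (full_types))
qed

lemma countable_enumerated_by_sections_of_new_point:
  assumes "countable S"
  obtains z where "z \<notin> S" and "\<And>s. s \<in> S \<Longrightarrow> \<exists>n. s = cantor_section (Suc n) z"
proof -
  define e where "e = from_nat_into S"
  have S_enum: "S \<subseteq> range e"
    using assms by (simp add: e_def subset_range_from_nat_into)
  have "countable ((\<lambda>x. cantor_code x e) -` S)"
    using countable_image_inj_on[OF countable_subset[OF image_vimage_subset assms]
        inj_on_subset[OF inj_cantor_code subset_UNIV]] .
  then have "(\<lambda>x. cantor_code x e) -` S \<noteq> UNIV"
    using uncountable_UNIV_cantor by auto
  then obtain x where x: "cantor_code x e \<notin> S"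
    by blast
  show thesis
  proof (rule that[OF x])
    fix s assume "s \<in> S"
    then show "\<exists>n. s = cantor_section (Suc n) (cantor_code x e)"
      using S_enum by (auto simp: cantor_section_code_Suc)
  qed
qed

lemma covered_by_insert_square:
  assumes "covered_by (S \<times> S) F" and "id \<in> F" and "\<And>s. s \<in> S \<Longrightarrow> \<exists>f \<in> F. s = f z"
  shows "covered_by (insert z S \<times> insert z S) F"
  unfolding covered_by_def
proof clarify
  fix x y assume "x \<in> insert z S" and "y \<in> insert z S"
  then consider "x \<in> S" "y \<in> S" | "x = z" "y \<in> S" | "x \<in> S" "y = z" | "x = z" "y = z"
    by blast
  then show "\<exists>f \<in> F. y = f x \<or> x = f y"
  proof cases
    case 1
    then show ?thesis
      using assms(1) unfolding covered_by_def by blast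
  next
    case 2
    then show ?thesis
      using assms(3) by blast
  next
    case 3
    then show ?thesis
      using assms(3) by blast
  next
    case 4
    then have "y = id x"
      by simp
    then show ?thesis
      using assms(2) by blast
  qed
qed

lemma maximal_covered_square_absorbs:
  assumes "maximal_covered_square F S" and "id \<in> F" and "\<And>s. s \<in> S \<Longrightarrow> \<exists>f \<in> F. s = f z"
  shows "z \<in> S"
  using assms covered_by_insert_square[of S F z]
  unfolding maximal_covered_square_def by blast

theorem theorem2p1:
  "\<exists>f :: nat \<Rightarrow> cantor \<Rightarrow> cantor.
     (\<forall>n. continuous_on UNIV (f n)) \<and>
     (\<forall>S. maximal_covered_square (range f) S \<longrightarrow> uncountable S)"
proof (intro exI[of _ section_family] conjI allI impI continuous_on_section_family notI)
  fix S assume max: "maximal_covered_square (range section_family) S" and "countable S"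
  obtain z where "z \<notin> S" and enum: "\<And>s. s \<in> S \<Longrightarrow> \<exists>n. s = cantor_section (Suc n) z"
    using countable_enumerated_by_sections_of_new_point[OF \<open>countable S\<close>] by blast
  have "id \<in> range section_family"
    by (metis rangeI section_family_def)
  moreover have "\<exists>f \<in> range section_family. s = f z" if "s \<in> S" for s
    using enum[OF that] by (metis Zero_not_Suc rangeI section_family_def)
  ultimately have "z \<in> S"
    by (rule maximal_covered_square_absorbs[OF max])
  with \<open>z \<notin> S\<close> show False by contradiction
qed

end
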